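(* Let $p,q\ge0$ with $n=p+q>0$, and let $\Gamma=\{(a_1,\dots,a_n)\in\mathbb{Z}^n\mid a_1+\cdots+a_n\in2\mathbb{Z}\}$. For $A\in\{A^+_{p|q},A^-_{q|p}\}$ let $C(A)=\bigoplus_{d\in\Gamma}A_d$ be the subsuperalgebra of elements whose $\mathbb{Z}^n$-support lies in $\Gamma$. Then $C(A^+_{p|q})$ and $C(A^-_{q|p})$ are isomorphic superalgebras.
   Context: $\Bbbk$ is an algebraically closed field of characteristic $0$. For integers $a,b\ge0$, $N=a+b$, and a sign $\pm$, the superalgebra $A^\pm_{a|b}$ is generated by $x_i,\partial_i$ ($1\le i\le N$), of parity $0$ for $i\le a$ and $1$ for $i>a$, subject to $[\partial_i,x_j]_\pm=\delta_{ij}$, $[x_i,x_j]_\pm=[\partial_i,\partial_j]_\pm=0$, with $[u,v]_\pm=uv\pm(-1)^{p(u)p(v)}vu$. It is $\mathbb{Z}^N$-graded by $\deg x_i=\mathbf{e}_i$, $\deg\partial_i=-\mathbf{e}_i$. (Thus $A^+_{p|q}$ has $p$ even Clifford pairs and $q$ odd Weyl pairs, while $A^-_{q|p}$ has $q$ even Weyl pairs and $p$ odd Clifford pairs.) *)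

theory Defs
  imports "HOL-Computational_Algebra.Polynomial"
begin

datatype gen = X nat | D nat   (* X i = x_i,  D i = \<partial>_i *)

fun gidx :: "gen \<Rightarrow> nat" where
  "gidx (X i) = i" | "gidx (D i) = i"

definition gpar :: "nat \<Rightarrow> gen \<Rightarrow> nat" where
  "gpar a g = (if gidx g \<le> a then 0 else 1)"

definition word_par :: "nat \<Rightarrow> gen list \<Rightarrow> nat" where
  "word_par a w = (sum_list (map (gpar a) w)) mod 2"

definition wdeg :: "gen list \<Rightarrow> nat \<Rightarrow> int" where
  "wdeg w i = int (length (filter (\<lambda>g. g = X i) w)) - int (length (filter (\<lambda>g. g = D i) w))"

definition letters :: "nat \<Rightarrow> gen set" where
  "letters N = {g. 1 \<le> gidx g \<and> gidx g \<le> N}"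

type_synonym 'k fa = "gen list \<Rightarrow> 'k"

(* elements of the free algebra k<x_1..x_N, d_1..d_N>: finitely supported coefficient functions *)
definition fa_carrier :: "nat \<Rightarrow> ('k::zero) fa set" where
  "fa_carrier N = {f. finite {w. f w \<noteq> 0} \<and> (\<forall>w. f w \<noteq> 0 \<longrightarrow> set w \<subseteq> letters N)}"

definition fa_zero :: "('k::zero) fa" where "fa_zero = (\<lambda>w. 0)"
definition fa_one :: "('k::{zero,one}) fa" where "fa_one = (\<lambda>w. if w = [] then 1 else 0)"
definition mono :: "gen list \<Rightarrow> ('k::{zero,one}) fa" where "mono u = (\<lambda>w. if w = u then 1 else 0)"
definition fa_add :: "('k::plus) fa \<Rightarrow> 'k fa \<Rightarrow> 'k fa" where "fa_add f g = (\<lambda>w. f w + g w)"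
definition fa_sub :: "('k::minus) fa \<Rightarrow> 'k fa \<Rightarrow> 'k fa" where "fa_sub f g = (\<lambda>w. f w - g w)"
definition fa_smult :: "'k::times \<Rightarrow> 'k fa \<Rightarrow> 'k fa" where "fa_smult c f = (\<lambda>w. c * f w)"
definition fa_mult :: "('k::comm_ring_1) fa \<Rightarrow> 'k fa \<Rightarrow> 'k fa" where
  "fa_mult f g = (\<lambda>w. \<Sum>i\<le>length w. f (take i w) * g (drop i w))"

(* s = True for the sign +, s = False for the sign -.
   sbr s a u v = [u,v]_\<pm> = uv \<pm> (-1)^{p(u)p(v)} vu  for generators u v *)
definition sbr :: "bool \<Rightarrow> nat \<Rightarrow> gen \<Rightarrow> gen \<Rightarrow> ('k::comm_ring_1) fa" where
  "sbr s a u v = fa_add (mono [u, v])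
      (fa_smult ((if s then 1 else -1) * (-1) ^ (gpar a u * gpar a v)) (mono [v, u]))"

definition rels :: "bool \<Rightarrow> nat \<Rightarrow> nat \<Rightarrow> ('k::comm_ring_1) fa set" where
  "rels s a N =
     {fa_sub (sbr s a (D i) (X j)) (if i = j then fa_one else fa_zero) | i j. i \<in> {1..N} \<and> j \<in> {1..N}}
   \<union> {sbr s a (X i) (X j) | i j. i \<in> {1..N} \<and> j \<in> {1..N}}
   \<union> {sbr s a (D i) (D j) | i j. i \<in> {1..N} \<and> j \<in> {1..N}}"

inductive_set rel_ideal :: "bool \<Rightarrow> nat \<Rightarrow> nat \<Rightarrow> ('k::comm_ring_1) fa set"
  for s :: bool and a :: nat and N :: nat where
  zero: "fa_zero \<in> rel_ideal s a N"
| gen: "r \<in> rels s a N \<Longrightarrow> set u \<subseteq> letters N \<Longrightarrow> set v \<subseteq> letters N \<Longrightarrow>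
          fa_mult (fa_mult (mono u) r) (mono v) \<in> rel_ideal s a N"
| add: "f \<in> rel_ideal s a N \<Longrightarrow> g \<in> rel_ideal s a N \<Longrightarrow> fa_add f g \<in> rel_ideal s a N"
| smult: "f \<in> rel_ideal s a N \<Longrightarrow> fa_smult c f \<in> rel_ideal s a N"

(* the class of f in A^{s}_{a|b} = free algebra / ideal *)
definition cls :: "bool \<Rightarrow> nat \<Rightarrow> nat \<Rightarrow> ('k::comm_ring_1) fa \<Rightarrow> 'k fa set" where
  "cls s a b f = {g \<in> fa_carrier (a + b). fa_sub f g \<in> rel_ideal s a (a + b)}"

definition Gamma :: "nat \<Rightarrow> (nat \<Rightarrow> int) set" where
  "Gamma N = {d. even (\<Sum>i\<in>{1..N}. d i)}"

(* representatives of C(A) = \<Oplus>_{d \<in> Gamma} A_d : sums of words of degree in Gamma *)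
definition CA :: "bool \<Rightarrow> nat \<Rightarrow> nat \<Rightarrow> ('k::comm_ring_1) fa set" where
  "CA s a b = {f \<in> fa_carrier (a + b). \<forall>w. f w \<noteq> 0 \<longrightarrow> wdeg w \<in> Gamma (a + b)}"

definition CA_par :: "bool \<Rightarrow> nat \<Rightarrow> nat \<Rightarrow> nat \<Rightarrow> ('k::comm_ring_1) fa set" where
  "CA_par s a b e = {f \<in> CA s a b. \<forall>w. f w \<noteq> 0 \<longrightarrow> word_par a w = e}"

definition C_super_iso :: "('k::comm_ring_1) itself \<Rightarrow> bool \<Rightarrow> nat \<Rightarrow> nat \<Rightarrow> bool \<Rightarrow> nat \<Rightarrow> nat \<Rightarrow> bool" where
  "C_super_iso (_ :: 'k itself) s a b s' a' b' \<longleftrightarrow>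
    (\<exists>\<Phi> :: 'k fa set \<Rightarrow> 'k fa set.
       bij_betw \<Phi> (cls s a b ` CA s a b) (cls s' a' b' ` CA s' a' b')
     \<and> (\<forall>f \<in> CA s a b. \<forall>g \<in> CA s a b. \<forall>h h'.
           h \<in> fa_carrier (a' + b') \<and> h' \<in> fa_carrier (a' + b')
           \<and> \<Phi> (cls s a b f) = cls s' a' b' h \<and> \<Phi> (cls s a b g) = cls s' a' b' h' \<longrightarrow>
             \<Phi> (cls s a b (fa_add f g)) = cls s' a' b' (fa_add h h')
           \<and> \<Phi> (cls s a b (fa_mult f g)) = cls s' a' b' (fa_mult h h'))
     \<and> (\<forall>f \<in> CA s a b. \<forall>c h.
           h \<in> fa_carrier (a' + b') \<and> \<Phi> (cls s a b f) = cls s' a' b' h \<longrightarrow>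
             \<Phi> (cls s a b (fa_smult c f)) = cls s' a' b' (fa_smult c h))
     \<and> \<Phi> (cls s a b fa_one) = cls s' a' b' fa_one
     \<and> (\<forall>e \<in> {0, 1}. \<Phi> ` (cls s a b ` CA_par s a b e) = cls s' a' b' ` CA_par s' a' b' e))"

end

theory Submission
  imports Defs "HOL-Library.Function_Algebras"
begin

text \<open>Both algebras C(A) are spanned by the classes of words of even length. Exchange the index
blocks {1..p} and {p+1..p+q}, so that Clifford pairs go to Clifford pairs and Weyl pairs to Weyl
pairs, and multiply each word w by the sign (-1)^E(w), where E(w) counts, for every Weyl letter of w,
the letters following it, plus one if that letter is a \<partial>. This sign is multiplicative when the right
factor has even length, does not change when \<partial>_i x_i is inserted, and flips under a swap of two
adjacent letters exactly when one of them is Weyl and the other Clifford, which is exactly when the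
defining relation of the pair changes from a commutator to an anticommutator or back. Hence the
twisted relabelling maps the relation ideal of A^+_{p|q} into that of A^-_{q|p}; on even words it
is multiplicative, and the twisted relabelling in the opposite direction is its inverse.\<close>

section \<open>The free algebra\<close>

lemma fa_add_eq_plus: "fa_add f g = f + g"
  by (auto simp: fa_add_def)

lemma fa_zero_eq_zero: "fa_zero = 0"
  by (auto simp: fa_zero_def)

lemma fa_one_eq_mono_Nil: "fa_one = mono []"
  by (simp add: fa_one_def mono_def)

lemma fa_sub_self: "fa_sub f f = (fa_zero :: 'k::comm_ring_1 fa)"
  by (simp add: fa_sub_def fa_zero_def)

lemma fa_sub_zero: "fa_sub f fa_zero = (f :: 'k::comm_ring_1 fa)"
  by (simp add: fa_sub_def fa_zero_def)

lemma sum_fun_apply: "(sum F S) w = (\<Sum>x\<in>S. F x w)"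
  by (induction S rule: infinite_finite_induct) auto

lemma fa_mult_add_left: "fa_mult (fa_add f g) h = fa_add (fa_mult f h) (fa_mult g h)"
  by (auto simp: fa_mult_def fa_add_def distrib_right sum.distrib)

lemma fa_mult_add_right: "fa_mult h (fa_add f g) = fa_add (fa_mult h f) (fa_mult h g)"
  by (auto simp: fa_mult_def fa_add_def distrib_left sum.distrib)

lemma fa_mult_sub_left: "fa_mult (fa_sub f g) h = fa_sub (fa_mult f h) (fa_mult g h)"
  by (auto simp: fa_mult_def fa_sub_def left_diff_distrib sum_subtractf)

lemma fa_mult_sub_right: "fa_mult h (fa_sub f g) = fa_sub (fa_mult h f) (fa_mult h g)"
  by (auto simp: fa_mult_def fa_sub_def right_diff_distrib sum_subtractf)

lemma fa_mult_smult_left: "fa_mult (fa_smult c f) h = fa_smult c (fa_mult f h)"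
  by (auto simp: fa_mult_def fa_smult_def sum_distrib_left mult.assoc)

lemma fa_mult_smult_right: "fa_mult h (fa_smult c f) = fa_smult c (fa_mult h f)"
  by (auto simp: fa_mult_def fa_smult_def sum_distrib_left mult.left_commute)

lemma fa_mult_zero_left: "fa_mult fa_zero h = fa_zero"
  by (simp add: fa_mult_def fa_zero_def)

lemma fa_mult_zero_right: "fa_mult h fa_zero = fa_zero"
  by (simp add: fa_mult_def fa_zero_def)

lemma fa_mult_sum_right:
  fixes F :: "'a \<Rightarrow> 'k::comm_ring_1 fa"
  shows "fa_mult h (sum F S) = (\<Sum>x\<in>S. fa_mult h (F x))"
proof (induction S rule: infinite_finite_induct)
  case (insert x S)
  have "sum F (insert x S) = F x + sum F S" "(\<Sum>y\<in>insert x S. fa_mult h (F y)) = fa_mult h (F x) + (\<Sum>y\<in>S. fa_mult h (F y))"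
    using insert.hyps by (rule sum.insert)+
  then show ?case
    using insert.IH fa_mult_add_right[of h "F x" "sum F S", unfolded fa_add_eq_plus] by (simp only:)
qed (simp_all add: fa_mult_def)

lemma fa_mult_sum_left:
  fixes F :: "'a \<Rightarrow> 'k::comm_ring_1 fa"
  shows "fa_mult (sum F S) h = (\<Sum>x\<in>S. fa_mult (F x) h)"
proof (induction S rule: infinite_finite_induct)
  case (insert x S)
  have "sum F (insert x S) = F x + sum F S" "(\<Sum>y\<in>insert x S. fa_mult (F y) h) = fa_mult (F x) h + (\<Sum>y\<in>S. fa_mult (F y) h)"
    using insert.hyps by (rule sum.insert)+
  then show ?case
    using insert.IH fa_mult_add_left[of "F x" "sum F S" h, unfolded fa_add_eq_plus] by (simp only:)
qed (simp_all add: fa_mult_def)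

lemma fa_mult_nonzero_split:
  "fa_mult f g w \<noteq> 0 \<Longrightarrow> \<exists>i\<le>length w. f (take i w) \<noteq> 0 \<and> g (drop i w) \<noteq> 0"
  unfolding fa_mult_def by (metis (no_types, lifting) atMost_iff mult_not_zero sum.neutral)

lemma take_append_eq_iff: "i \<le> length (u @ x) \<Longrightarrow> take i (u @ x) = u \<longleftrightarrow> i = length u"
proof
  assume "i \<le> length (u @ x)" "take i (u @ x) = u"
  then have "length (take i (u @ x)) = length u" by simp
  then show "i = length u" using \<open>i \<le> _\<close> by simp
qed simp

lemma drop_append_eq_iff: "i \<le> length (x @ v) \<Longrightarrow> drop i (x @ v) = v \<longleftrightarrow> i = length x"
proof
  assume "i \<le> length (x @ v)" "drop i (x @ v) = v"
  then have "length (drop i (x @ v)) = length v" by simp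
  then show "i = length x" using \<open>i \<le> _\<close> by simp
qed simp

lemma fa_mult_mono_left_append: "fa_mult (mono u) Y (u @ x) = (Y x :: 'k::comm_ring_1)"
proof -
  have "fa_mult (mono u) Y (u @ x) = (\<Sum>i\<le>length (u @ x). if i = length u then Y x else 0)"
    unfolding fa_mult_def mono_def
  proof (rule sum.cong)
    fix i assume "i \<in> {..length (u @ x)}"
    then have "take i (u @ x) = u \<longleftrightarrow> i = length u" by (intro take_append_eq_iff) auto
    then show "(if take i (u @ x) = u then 1 else 0) * Y (drop i (u @ x)) = (if i = length u then Y x else 0)"
      by auto
  qed simp
  also have "\<dots> = Y x" by (subst sum.delta) auto
  finally show ?thesis .
qed

lemma fa_mult_mono_left_other: "(\<forall>x. z \<noteq> u @ x) \<Longrightarrow> fa_mult (mono u) Y z = (0 :: 'k::comm_ring_1)"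
  unfolding fa_mult_def
proof (rule sum.neutral, intro ballI)
  fix i assume "\<forall>x. z \<noteq> u @ x"
  then have "take i z \<noteq> u" by (metis append_take_drop_id)
  then show "mono u (take i z) * Y (drop i z) = 0" by (simp add: mono_def)
qed

lemma fa_mult_mono_right_append: "fa_mult Y (mono v) (x @ v) = (Y x :: 'k::comm_ring_1)"
proof -
  have "fa_mult Y (mono v) (x @ v) = (\<Sum>i\<le>length (x @ v). if i = length x then Y x else 0)"
    unfolding fa_mult_def mono_def
  proof (rule sum.cong)
    fix i assume "i \<in> {..length (x @ v)}"
    then have "drop i (x @ v) = v \<longleftrightarrow> i = length x" by (intro drop_append_eq_iff) auto
    then show "Y (take i (x @ v)) * (if drop i (x @ v) = v then 1 else 0) = (if i = length x then Y x else 0)"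
      by auto
  qed simp
  also have "\<dots> = Y x" by (subst sum.delta) auto
  finally show ?thesis .
qed

lemma fa_mult_mono_right_other: "(\<forall>x. z \<noteq> x @ v) \<Longrightarrow> fa_mult Y (mono v) z = (0 :: 'k::comm_ring_1)"
  unfolding fa_mult_def
proof (rule sum.neutral, intro ballI)
  fix i assume "\<forall>x. z \<noteq> x @ v"
  then have "drop i z \<noteq> v" by (metis append_take_drop_id)
  then show "Y (take i z) * mono v (drop i z) = 0" by (simp add: mono_def)
qed

lemma fa_mult_mono_mono: "fa_mult (mono u) (mono v) = (mono (u @ v) :: 'k::comm_ring_1 fa)"
proof
  fix z
  show "fa_mult (mono u) (mono v) z = (mono (u @ v) :: 'k fa) z"
  proof (cases "\<exists>x. z = u @ x")
    case True
    then obtain x where "z = u @ x" by blast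
    then show ?thesis using fa_mult_mono_left_append[of u "mono v" x] by (simp add: mono_def)
  next
    case False
    then show ?thesis using fa_mult_mono_left_other[of z u] by (auto simp: mono_def)
  qed
qed

lemma fa_mult_mono_mono_right:
  "fa_mult (fa_mult Y (mono v)) (mono w) = (fa_mult Y (mono (v @ w)) :: 'k::comm_ring_1 fa)"
proof
  fix z
  show "fa_mult (fa_mult Y (mono v)) (mono w) z = (fa_mult Y (mono (v @ w)) :: 'k fa) z"
  proof (cases "\<exists>x. z = x @ v @ w")
    case True
    then obtain x where z: "z = x @ v @ w" by blast
    have "fa_mult (fa_mult Y (mono v)) (mono w) z = fa_mult Y (mono v) (x @ v)"
      unfolding z by (metis append_assoc fa_mult_mono_right_append)
    also have "\<dots> = Y x" by (rule fa_mult_mono_right_append)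
    finally show ?thesis unfolding z using fa_mult_mono_right_append[of Y "v @ w" x] by simp
  next
    case False
    then have r: "fa_mult Y (mono (v @ w)) z = (0::'k)" by (intro fa_mult_mono_right_other) auto
    show ?thesis
    proof (cases "\<exists>y. z = y @ w")
      case True
      then obtain y where z: "z = y @ w" by blast
      have "\<forall>x. y \<noteq> x @ v" using False z by auto
      then have "fa_mult Y (mono v) y = 0" by (rule fa_mult_mono_right_other)
      then show ?thesis using r unfolding z by (simp add: fa_mult_mono_right_append)
    next
      case False
      then show ?thesis using r by (simp add: fa_mult_mono_right_other)
    qed
  qed
qed

lemma fa_mult_mono_mono_left:
  "fa_mult (mono w) (fa_mult (mono u) Y) = (fa_mult (mono (w @ u)) Y :: 'k::comm_ring_1 fa)"
proof
  fix z
  show "fa_mult (mono w) (fa_mult (mono u) Y) z = (fa_mult (mono (w @ u)) Y :: 'k fa) z"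
  proof (cases "\<exists>x. z = w @ u @ x")
    case True
    then obtain x where z: "z = w @ u @ x" by blast
    have "fa_mult (mono w) (fa_mult (mono u) Y) z = fa_mult (mono u) Y (u @ x)"
      unfolding z by (rule fa_mult_mono_left_append)
    also have "\<dots> = Y x" by (rule fa_mult_mono_left_append)
    finally show ?thesis unfolding z using fa_mult_mono_left_append[of "w @ u" Y x] by simp
  next
    case False
    then have r: "fa_mult (mono (w @ u)) Y z = (0::'k)" by (intro fa_mult_mono_left_other) auto
    show ?thesis
    proof (cases "\<exists>y. z = w @ y")
      case True
      then obtain y where z: "z = w @ y" by blast
      have "\<forall>x. y \<noteq> u @ x" using False z by auto
      then have "fa_mult (mono u) Y y = 0" by (rule fa_mult_mono_left_other)
      then show ?thesis using r unfolding z by (simp add: fa_mult_mono_left_append)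
    next
      case False
      then show ?thesis using r by (simp add: fa_mult_mono_left_other)
    qed
  qed
qed

lemma fa_mult_mono_assoc:
  "fa_mult (mono w) (fa_mult Y (mono v)) = (fa_mult (fa_mult (mono w) Y) (mono v) :: 'k::comm_ring_1 fa)"
proof
  fix z
  show "fa_mult (mono w) (fa_mult Y (mono v)) z = (fa_mult (fa_mult (mono w) Y) (mono v) :: 'k fa) z"
  proof (cases "\<exists>x. z = w @ x @ v")
    case True
    then obtain x where z: "z = w @ x @ v" by blast
    have "fa_mult (mono w) (fa_mult Y (mono v)) z = Y x"
      unfolding z by (simp add: fa_mult_mono_left_append fa_mult_mono_right_append)
    moreover have "fa_mult (fa_mult (mono w) Y) (mono v) z = Y x"
      unfolding z by (metis append_assoc fa_mult_mono_left_append fa_mult_mono_right_append)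
    ultimately show ?thesis by simp
  next
    case False
    have l: "fa_mult (mono w) (fa_mult Y (mono v)) z = (0::'k)"
    proof (cases "\<exists>y. z = w @ y")
      case True
      then obtain y where z: "z = w @ y" by blast
      have "\<forall>x. y \<noteq> x @ v" using False z by auto
      then show ?thesis unfolding z by (simp add: fa_mult_mono_left_append fa_mult_mono_right_other)
    qed (simp add: fa_mult_mono_left_other)
    have r: "fa_mult (fa_mult (mono w) Y) (mono v) z = (0::'k)"
    proof (cases "\<exists>y. z = y @ v")
      case True
      then obtain y where z: "z = y @ v" by blast
      have "\<forall>x. y \<noteq> w @ x" using False z by auto
      then show ?thesis unfolding z by (simp add: fa_mult_mono_right_append fa_mult_mono_left_other)
    qed (simp add: fa_mult_mono_right_other)
    show ?thesis using l r by simp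
  qed
qed

lemma fa_eq_sum_monos:
  assumes "g \<in> fa_carrier N"
  shows "g = (\<Sum>w\<in>{w. g w \<noteq> 0}. fa_smult (g w) (mono w :: 'k::comm_ring_1 fa))"
proof
  fix z
  have "(\<Sum>w\<in>{w. g w \<noteq> 0}. fa_smult (g w) (mono w :: 'k fa)) z
      = (\<Sum>w\<in>{w. g w \<noteq> 0}. if w = z then g z else 0)"
    unfolding sum_fun_apply by (rule sum.cong) (auto simp: fa_smult_def mono_def)
  also have "\<dots> = g z"
    using assms by (subst sum.delta) (auto simp: fa_carrier_def)
  finally show "g z = (\<Sum>w\<in>{w. g w \<noteq> 0}. fa_smult (g w) (mono w :: 'k fa)) z" by simp
qed

lemma fa_carrier_add:
  fixes f g :: "'k::comm_ring_1 fa"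
  shows "f \<in> fa_carrier N \<Longrightarrow> g \<in> fa_carrier N \<Longrightarrow> fa_add f g \<in> fa_carrier N"
proof -
  assume f: "f \<in> fa_carrier N" and g: "g \<in> fa_carrier N"
  have "{w. fa_add f g w \<noteq> 0} \<subseteq> {w. f w \<noteq> 0} \<union> {w. g w \<noteq> 0}" by (auto simp: fa_add_def)
  then have "finite {w. fa_add f g w \<noteq> 0}"
    using f g by (auto simp: fa_carrier_def intro: finite_subset)
  moreover have "set w \<subseteq> letters N" if "fa_add f g w \<noteq> 0" for w
    using that f g by (cases "f w = 0") (auto simp: fa_carrier_def fa_add_def)
  ultimately show ?thesis by (simp add: fa_carrier_def)
qed

lemma fa_carrier_smult:
  fixes f :: "'k::comm_ring_1 fa"
  shows "f \<in> fa_carrier N \<Longrightarrow> fa_smult c f \<in> fa_carrier N"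
proof -
  assume f: "f \<in> fa_carrier N"
  have "{w. fa_smult c f w \<noteq> 0} \<subseteq> {w. f w \<noteq> 0}" by (auto simp: fa_smult_def)
  then show ?thesis using f by (auto simp: fa_carrier_def fa_smult_def intro: finite_subset)
qed

lemma fa_carrier_mult:
  assumes f: "f \<in> fa_carrier N" and g: "g \<in> fa_carrier N"
  shows "fa_mult f g \<in> fa_carrier N"
proof -
  have "{w. fa_mult f g w \<noteq> 0} \<subseteq> (\<lambda>(x, y). x @ y) ` ({w. f w \<noteq> 0} \<times> {w. g w \<noteq> 0})"
  proof
    fix w assume "w \<in> {w. fa_mult f g w \<noteq> 0}"
    then obtain i where "f (take i w) \<noteq> 0" "g (drop i w) \<noteq> 0"
      using fa_mult_nonzero_split by blast
    then show "w \<in> (\<lambda>(x, y). x @ y) ` ({w. f w \<noteq> 0} \<times> {w. g w \<noteq> 0})"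
      by (intro image_eqI[of _ _ "(take i w, drop i w)"]) auto
  qed
  then have "finite {w. fa_mult f g w \<noteq> 0}"
    using f g by (auto simp: fa_carrier_def intro: finite_subset)
  moreover have "set w \<subseteq> letters N" if nz: "fa_mult f g w \<noteq> 0" for w
  proof -
    obtain i where "f (take i w) \<noteq> 0" "g (drop i w) \<noteq> 0"
      using fa_mult_nonzero_split[OF nz] by blast
    then have "set (take i w) \<subseteq> letters N" "set (drop i w) \<subseteq> letters N"
      using f g by (auto simp: fa_carrier_def)
    then show ?thesis by (metis append_take_drop_id le_sup_iff set_append)
  qed
  ultimately show ?thesis by (simp add: fa_carrier_def)
qed

section \<open>The relation ideal and its classes\<close>

lemma rel_ideal_sum:
  "finite S \<Longrightarrow> (\<And>x. x \<in> S \<Longrightarrow> F x \<in> rel_ideal s a N) \<Longrightarrow> sum F S \<in> rel_ideal s a N"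
  by (induction S rule: finite_induct)
     (simp_all add: fa_zero_eq_zero[symmetric] rel_ideal.zero rel_ideal.add[unfolded fa_add_eq_plus])

lemma rel_ideal_sub:
  assumes "f \<in> rel_ideal s a N" "g \<in> rel_ideal s a N"
  shows "fa_sub f g \<in> rel_ideal s a N"
proof -
  have "fa_sub f g = fa_add f (fa_smult (-1) g)"
    by (auto simp: fa_sub_def fa_add_def fa_smult_def)
  then show ?thesis using assms by (simp add: rel_ideal.add rel_ideal.smult)
qed

lemma rel_ideal_mult_mono_right:
  "f \<in> rel_ideal s a N \<Longrightarrow> set w \<subseteq> letters N \<Longrightarrow> fa_mult f (mono w) \<in> rel_ideal s a N"
proof (induction rule: rel_ideal.induct)
  case zero
  then show ?case by (simp add: fa_mult_zero_left rel_ideal.zero)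
next
  case (gen r u v)
  then show ?case by (simp add: fa_mult_mono_mono_right rel_ideal.gen)
next
  case (add f g)
  then show ?case by (simp add: fa_mult_add_left rel_ideal.add)
next
  case (smult f c)
  then show ?case by (simp add: fa_mult_smult_left rel_ideal.smult)
qed

lemma rel_ideal_mult_mono_left:
  "f \<in> rel_ideal s a N \<Longrightarrow> set w \<subseteq> letters N \<Longrightarrow> fa_mult (mono w) f \<in> rel_ideal s a N"
proof (induction rule: rel_ideal.induct)
  case zero
  then show ?case by (simp add: fa_mult_zero_right rel_ideal.zero)
next
  case (gen r u v)
  then show ?case by (simp add: fa_mult_mono_assoc fa_mult_mono_mono_left rel_ideal.gen)
next
  case (add f g)
  then show ?case by (simp add: fa_mult_add_right rel_ideal.add)
next
  case (smult f c)
  then show ?case by (simp add: fa_mult_smult_right rel_ideal.smult)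
qed

lemma rel_ideal_mult_right:
  assumes f: "f \<in> rel_ideal s a N" and g: "g \<in> fa_carrier N"
  shows "fa_mult f g \<in> rel_ideal s a N"
proof -
  have "fa_mult f g = (\<Sum>w\<in>{w. g w \<noteq> 0}. fa_mult f (fa_smult (g w) (mono w)))"
    by (subst fa_eq_sum_monos[OF g]) (rule fa_mult_sum_right)
  also have "\<dots> \<in> rel_ideal s a N"
    using f g by (intro rel_ideal_sum)
      (auto simp: fa_carrier_def fa_mult_smult_right intro: rel_ideal.smult rel_ideal_mult_mono_right)
  finally show ?thesis .
qed

lemma rel_ideal_mult_left:
  assumes f: "f \<in> rel_ideal s a N" and g: "g \<in> fa_carrier N"
  shows "fa_mult g f \<in> rel_ideal s a N"
proof -
  have "fa_mult g f = (\<Sum>w\<in>{w. g w \<noteq> 0}. fa_mult (fa_smult (g w) (mono w)) f)"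
    by (subst fa_eq_sum_monos[OF g]) (rule fa_mult_sum_left)
  also have "\<dots> \<in> rel_ideal s a N"
    using f g by (intro rel_ideal_sum)
      (auto simp: fa_carrier_def fa_mult_smult_left intro: rel_ideal.smult rel_ideal_mult_mono_left)
  finally show ?thesis .
qed

lemma cls_eq_iff:
  assumes "f \<in> fa_carrier (a + b)" "g \<in> fa_carrier (a + b)"
  shows "cls s a b f = cls s a b g \<longleftrightarrow> fa_sub f g \<in> rel_ideal s a (a + b)"
proof
  assume "cls s a b f = cls s a b g"
  moreover have "f \<in> cls s a b f"
    using assms(1) by (simp add: cls_def fa_sub_self rel_ideal.zero)
  ultimately have "fa_sub g f \<in> rel_ideal s a (a + b)" by (simp add: cls_def)
  then have "fa_smult (-1) (fa_sub g f) \<in> rel_ideal s a (a + b)" by (rule rel_ideal.smult)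
  moreover have "fa_smult (-1) (fa_sub g f) = fa_sub f g" by (auto simp: fa_smult_def fa_sub_def)
  ultimately show "fa_sub f g \<in> rel_ideal s a (a + b)" by simp
next
  assume fg: "fa_sub f g \<in> rel_ideal s a (a + b)"
  have "fa_sub f h \<in> rel_ideal s a (a + b) \<longleftrightarrow> fa_sub g h \<in> rel_ideal s a (a + b)" for h
  proof
    assume "fa_sub f h \<in> rel_ideal s a (a + b)"
    from rel_ideal_sub[OF this fg] show "fa_sub g h \<in> rel_ideal s a (a + b)"
      by (simp add: fa_sub_def)
  next
    assume "fa_sub g h \<in> rel_ideal s a (a + b)"
    from rel_ideal.add[OF fg this] show "fa_sub f h \<in> rel_ideal s a (a + b)"
      by (simp add: fa_sub_def fa_add_def)
  qed
  then show "cls s a b f = cls s a b g" by (auto simp: cls_def)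
qed

definition is_commutator :: "bool \<Rightarrow> nat \<Rightarrow> gen \<Rightarrow> gen \<Rightarrow> bool" where
  "is_commutator s a u v \<longleftrightarrow> (s \<longleftrightarrow> odd (gpar a u * gpar a v))"

lemma sbr_coefficient:
  "((if s then 1 else -1) * (-1) ^ (gpar a u * gpar a v) :: 'k::comm_ring_1)
    = (if is_commutator s a u v then -1 else 1)"
  by (cases "even (gpar a u * gpar a v)") (auto simp: is_commutator_def)

lemma fa_mult_mono_relation_mono:
  "fa_mult (fa_mult (mono u) (fa_sub (sbr s a \<alpha> \<beta>) (if d then fa_one else fa_zero))) (mono v)
   = fa_sub (fa_add (mono (u @ [\<alpha>, \<beta>] @ v))
        (fa_smult (if is_commutator s a \<alpha> \<beta> then -1 else 1) (mono (u @ [\<beta>, \<alpha>] @ v))))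
        (if d then mono (u @ v) else (fa_zero :: 'k::comm_ring_1 fa))"
  unfolding sbr_def sbr_coefficient
  by (cases d) (simp_all add: fa_one_eq_mono_Nil fa_mult_sub_left fa_mult_sub_right fa_mult_add_left
      fa_mult_add_right fa_mult_smult_left fa_mult_smult_right fa_mult_mono_mono fa_mult_zero_left
      fa_mult_zero_right)

section \<open>The even part\<close>

fun is_D :: "gen \<Rightarrow> bool" where
  "is_D (X i) = False"
| "is_D (D i) = True"

lemma sum_wdeg:
  "set w \<subseteq> letters N \<Longrightarrow>
    (\<Sum>i\<in>{1..N}. wdeg w i) = int (length (filter (\<lambda>g. \<not> is_D g) w)) - int (length (filter is_D w))"
proof (induction w)
  case Nil
  then show ?case by (simp add: wdeg_def)
next
  case (Cons g w)
  have wdeg_Cons: "wdeg (g # w) i = wdeg w i + (if g = X i then 1 else 0) - (if g = D i then 1 else 0)" for i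
    by (auto simp: wdeg_def)
  have "gidx g \<in> {1..N}" using Cons.prems by (auto simp: letters_def)
  then have "(\<Sum>i\<in>{1..N}. (if g = X i then 1 else 0::int)) = (if is_D g then 0 else 1)"
    and "(\<Sum>i\<in>{1..N}. (if g = D i then 1 else 0::int)) = (if is_D g then 1 else 0)"
    by (cases g; simp)+
  then show ?case
    using Cons by (simp add: wdeg_Cons sum.distrib sum_subtractf)
qed

lemma wdeg_in_Gamma_iff: "set w \<subseteq> letters N \<Longrightarrow> wdeg w \<in> Gamma N \<longleftrightarrow> even (length w)"
proof -
  assume w: "set w \<subseteq> letters N"
  have "length w = length (filter (\<lambda>g. \<not> is_D g) w) + length (filter is_D w)"
    using sum_length_filter_compl[of is_D w] by simp
  then show ?thesis unfolding Gamma_def using sum_wdeg[OF w] by (simp add: even_diff)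
qed

lemma CA_iff: "f \<in> CA s a b \<longleftrightarrow> f \<in> fa_carrier (a + b) \<and> (\<forall>w. f w \<noteq> 0 \<longrightarrow> even (length w))"
  by (auto simp: CA_def fa_carrier_def wdeg_in_Gamma_iff)

lemma CA_add: "f \<in> CA s a b \<Longrightarrow> g \<in> CA s a b \<Longrightarrow> fa_add f g \<in> CA s a b"
proof -
  assume f: "f \<in> CA s a b" and g: "g \<in> CA s a b"
  have "even (length w)" if "fa_add f g w \<noteq> 0" for w
    using that f g by (cases "f w = 0") (auto simp: CA_iff fa_add_def)
  then show ?thesis using f g fa_carrier_add by (auto simp: CA_iff)
qed

lemma CA_smult: "f \<in> CA s a b \<Longrightarrow> fa_smult c f \<in> CA s a b"
proof -
  assume f: "f \<in> CA s a b"
  have "even (length w)" if "fa_smult c f w \<noteq> 0" for w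
    using that f by (cases "f w = 0") (auto simp: CA_iff fa_smult_def)
  then show ?thesis using f fa_carrier_smult by (auto simp: CA_iff)
qed

lemma CA_mult: "f \<in> CA s a b \<Longrightarrow> g \<in> CA s a b \<Longrightarrow> fa_mult f g \<in> CA s a b"
proof -
  assume f: "f \<in> CA s a b" and g: "g \<in> CA s a b"
  have "even (length w)" if nz: "fa_mult f g w \<noteq> 0" for w
  proof -
    obtain i where "f (take i w) \<noteq> 0" "g (drop i w) \<noteq> 0"
      using fa_mult_nonzero_split[OF nz] by blast
    then have "even (length (take i w))" "even (length (drop i w))"
      using f g by (auto simp: CA_iff)
    then show ?thesis by (metis append_take_drop_id even_add length_append)
  qed
  then show ?thesis using f g fa_carrier_mult by (auto simp: CA_iff)
qed

lemma CA_one: "fa_one \<in> CA s a b"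
  by (auto simp: CA_iff fa_carrier_def fa_one_def)

lemma word_par_eq_count: "word_par a w = length (filter (\<lambda>g. a < gidx g) w) mod 2"
proof -
  have "sum_list (map (gpar a) w) = length (filter (\<lambda>g. a < gidx g) w)"
    by (induction w) (auto simp: gpar_def)
  then show ?thesis by (simp add: word_par_def)
qed

section \<open>The twisting sign and twisted relabelling\<close>

fun relabel :: "(nat \<Rightarrow> nat) \<Rightarrow> gen \<Rightarrow> gen" where
  "relabel \<sigma> (X i) = X (\<sigma> i)"
| "relabel \<sigma> (D i) = D (\<sigma> i)"

lemma gidx_relabel: "gidx (relabel \<sigma> g) = \<sigma> (gidx g)"
  by (cases g) auto

fun twist_exp :: "(nat \<Rightarrow> bool) \<Rightarrow> gen list \<Rightarrow> nat" where
  "twist_exp P [] = 0"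
| "twist_exp P (g # w) = twist_exp P w + (if P (gidx g) then length w + (if is_D g then 1 else 0) else 0)"

definition twist_sign :: "(nat \<Rightarrow> bool) \<Rightarrow> gen list \<Rightarrow> 'k::comm_ring_1" where
  "twist_sign P w = (-1) ^ twist_exp P w"

lemma twist_exp_append:
  "twist_exp P (x @ y) = twist_exp P x + twist_exp P y + length (filter (\<lambda>g. P (gidx g)) x) * length y"
  by (induction x) (auto simp: algebra_simps)

lemma twist_sign_append:
  "even (length y) \<Longrightarrow> twist_sign P (x @ y) = (twist_sign P x * twist_sign P y :: 'k::comm_ring_1)"
  by (auto simp: twist_sign_def twist_exp_append power_add)

lemma twist_sign_swap:
  "twist_sign P (u @ [h, g] @ v) =
    (if P (gidx g) = P (gidx h) then 1 else -1) * (twist_sign P (u @ [g, h] @ v) :: 'k::comm_ring_1)"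
proof -
  have "twist_exp P (u @ [g, h] @ v) + (if P (gidx h) then 1 else 0)
      = twist_exp P (u @ [h, g] @ v) + (if P (gidx g) then 1 else 0)"
    by (simp add: twist_exp_append)
  then have "(-1::'k) ^ (twist_exp P (u @ [g, h] @ v) + (if P (gidx h) then 1 else 0))
      = (-1) ^ (twist_exp P (u @ [h, g] @ v) + (if P (gidx g) then 1 else 0))"
    by argo
  then show ?thesis by (auto simp: twist_sign_def power_add split: if_splits)
qed

lemma twist_sign_insert_D_X:
  "twist_sign P (u @ [D i, X i] @ v) = (twist_sign P (u @ v) :: 'k::comm_ring_1)"
proof -
  have "twist_exp P (u @ [D i, X i] @ v)
      = twist_exp P (u @ v) + 2 * ((if P i then length v + 1 else 0) + length (filter (\<lambda>g. P (gidx g)) u))"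
    by (simp add: twist_exp_append algebra_simps)
  then show ?thesis by (simp add: twist_sign_def power_add power_mult)
qed

lemma twist_exp_relabel:
  "(\<And>g. g \<in> set w \<Longrightarrow> Q (\<sigma> (gidx g)) = P (gidx g)) \<Longrightarrow> twist_exp Q (map (relabel \<sigma>) w) = twist_exp P w"
proof (induction w)
  case (Cons g w)
  have "is_D (relabel \<sigma> g) = is_D g" by (cases g) auto
  then show ?case using Cons by (auto simp: gidx_relabel)
qed simp

definition twisted_relabel :: "nat \<Rightarrow> (nat \<Rightarrow> nat) \<Rightarrow> (nat \<Rightarrow> bool) \<Rightarrow> 'k::comm_ring_1 fa \<Rightarrow> 'k fa" where
  "twisted_relabel N \<sigma> P f =
    (\<lambda>w. if set w \<subseteq> letters N then twist_sign P (map (relabel \<sigma>) w) * f (map (relabel \<sigma>) w) else 0)"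

lemma twisted_relabel_cancel:
  assumes maps_to: "\<And>i. i \<in> {1..N} \<Longrightarrow> \<tau> i \<in> {1..N}"
    and inv: "\<And>i. i \<in> {1..N} \<Longrightarrow> \<sigma> (\<tau> i) = i"
    and sign: "\<And>i. i \<in> {1..N} \<Longrightarrow> Q (\<tau> i) = P i"
    and f: "f \<in> fa_carrier N"
  shows "twisted_relabel N \<tau> Q (twisted_relabel N \<sigma> P f) = (f :: 'k::comm_ring_1 fa)"
proof
  fix z
  show "twisted_relabel N \<tau> Q (twisted_relabel N \<sigma> P f) z = f z"
  proof (cases "set z \<subseteq> letters N")
    case True
    then have "set (map (relabel \<tau>) z) \<subseteq> letters N"
      using maps_to by (auto simp: letters_def gidx_relabel)
    moreover have "map (relabel \<sigma>) (map (relabel \<tau>) z) = z"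
    proof -
      have "relabel \<sigma> (relabel \<tau> g) = g" if "g \<in> letters N" for g
        using that inv by (cases g) (auto simp: letters_def)
      then show ?thesis using True by (auto intro!: map_idI)
    qed
    moreover have "twist_exp Q (map (relabel \<tau>) z) = twist_exp P z"
      using True sign by (intro twist_exp_relabel) (auto simp: letters_def)
    moreover have "twist_sign P z * twist_sign P z = (1::'k)"
      by (simp add: twist_sign_def flip: power_add)
    ultimately show ?thesis
      using True by (simp add: twisted_relabel_def twist_sign_def mult.assoc[symmetric])
  next
    case False
    then show ?thesis using f by (auto simp: twisted_relabel_def fa_carrier_def)
  qed
qed

section \<open>The isomorphism induced by a twisted relabelling\<close>

locale twist =
  fixes N :: nat and \<pi> \<pi>' :: "nat \<Rightarrow> nat" and P :: "nat \<Rightarrow> bool"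
    and s :: bool and a b :: nat and s' :: bool and a' b' :: nat
  assumes dims: "a + b = N" "a' + b' = N"
    and maps_to: "\<And>i. i \<in> {1..N} \<Longrightarrow> \<pi> i \<in> {1..N}"
    and maps_to': "\<And>i. i \<in> {1..N} \<Longrightarrow> \<pi>' i \<in> {1..N}"
    and inverse: "\<And>i. i \<in> {1..N} \<Longrightarrow> \<pi>' (\<pi> i) = i"
    and inverse': "\<And>i. i \<in> {1..N} \<Longrightarrow> \<pi> (\<pi>' i) = i"
    and commutator_relabel: "\<And>g h. g \<in> letters N \<Longrightarrow> h \<in> letters N \<Longrightarrow>
      (is_commutator s a g h \<longleftrightarrow> is_commutator s' a' (relabel \<pi> g) (relabel \<pi> h))
        \<longleftrightarrow> P (gidx g) = P (gidx h)"
    and word_par_relabel: "\<And>w. set w \<subseteq> letters N \<Longrightarrow> even (length w) \<Longrightarrow>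
      word_par a' (map (relabel \<pi>) w) = word_par a w"
begin

abbreviation T :: "'k::comm_ring_1 fa \<Rightarrow> 'k fa" where
  "T \<equiv> twisted_relabel N \<pi>' P"

lemma CA_source_iff: "f \<in> CA s a b \<longleftrightarrow> f \<in> fa_carrier N \<and> (\<forall>w. f w \<noteq> 0 \<longrightarrow> even (length w))"
  by (simp add: CA_iff dims)

lemma CA_target_iff: "f \<in> CA s' a' b' \<longleftrightarrow> f \<in> fa_carrier N \<and> (\<forall>w. f w \<noteq> 0 \<longrightarrow> even (length w))"
  by (simp add: CA_iff dims)

lemma map_relabel_letters: "set w \<subseteq> letters N \<Longrightarrow> set (map (relabel \<pi>) w) \<subseteq> letters N"
  using maps_to by (auto simp: letters_def gidx_relabel)

lemma map_relabel_letters': "set w \<subseteq> letters N \<Longrightarrow> set (map (relabel \<pi>') w) \<subseteq> letters N"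
  using maps_to' by (auto simp: letters_def gidx_relabel)

lemma map_relabel_inverse: "set w \<subseteq> letters N \<Longrightarrow> map (relabel \<pi>') (map (relabel \<pi>) w) = w"
proof -
  assume "set w \<subseteq> letters N"
  moreover have "relabel \<pi>' (relabel \<pi> g) = g" if "g \<in> letters N" for g
    using that inverse by (cases g) (auto simp: letters_def)
  ultimately show ?thesis by (auto intro!: map_idI)
qed

lemma map_relabel_inverse': "set w \<subseteq> letters N \<Longrightarrow> map (relabel \<pi>) (map (relabel \<pi>') w) = w"
proof -
  assume "set w \<subseteq> letters N"
  moreover have "relabel \<pi> (relabel \<pi>' g) = g" if "g \<in> letters N" for g
    using that inverse' by (cases g) (auto simp: letters_def)
  ultimately show ?thesis by (auto intro!: map_idI)
qed

lemma T_apply: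
  "set z \<subseteq> letters N \<Longrightarrow> T f z = twist_sign P (map (relabel \<pi>') z) * f (map (relabel \<pi>') z)"
  by (simp add: twisted_relabel_def)

lemma T_apply_nonletters: "\<not> set z \<subseteq> letters N \<Longrightarrow> T f z = 0"
  by (simp add: twisted_relabel_def)

lemma T_nonzero: "T f z \<noteq> 0 \<Longrightarrow> set z \<subseteq> letters N \<and> f (map (relabel \<pi>') z) \<noteq> 0"
  by (auto simp: twisted_relabel_def split: if_splits)

lemma T_add: "T (fa_add f g) = fa_add (T f) (T g)"
  by (auto simp: twisted_relabel_def fa_add_def distrib_left)

lemma T_sub: "T (fa_sub f g) = fa_sub (T f) (T g)"
  by (auto simp: twisted_relabel_def fa_sub_def right_diff_distrib)

lemma T_smult: "T (fa_smult c f) = fa_smult c (T f)"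
  by (auto simp: twisted_relabel_def fa_smult_def mult.left_commute)

lemma T_zero: "T fa_zero = fa_zero"
  by (auto simp: twisted_relabel_def fa_zero_def)

lemma T_mono:
  assumes w: "set w \<subseteq> letters N"
  shows "T (mono w) = fa_smult (twist_sign P w) (mono (map (relabel \<pi>) w))"
proof
  fix z
  show "T (mono w) z = fa_smult (twist_sign P w) (mono (map (relabel \<pi>) w)) z"
  proof (cases "set z \<subseteq> letters N")
    case True
    then have "map (relabel \<pi>') z = w \<longleftrightarrow> z = map (relabel \<pi>) w"
      using map_relabel_inverse'[OF True] map_relabel_inverse[OF w] by auto
    then show ?thesis using True by (auto simp: T_apply fa_smult_def mono_def)
  next
    case False
    then have "z \<noteq> map (relabel \<pi>) w" using map_relabel_letters[OF w] by metis
    then show ?thesis using False by (simp add: T_apply_nonletters fa_smult_def mono_def)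
  qed
qed

lemma T_one: "T fa_one = fa_one"
  using T_mono[of "[]"] by (simp add: fa_one_eq_mono_Nil twist_sign_def fa_smult_def)

lemma rels_relabel_cases:
  assumes "r \<in> rels s a N"
  obtains \<alpha> \<beta> d where "\<alpha> \<in> letters N" "\<beta> \<in> letters N"
    "r = fa_sub (sbr s a \<alpha> \<beta>) (if d then fa_one else fa_zero)"
    "d \<Longrightarrow> \<exists>i. \<alpha> = D i \<and> \<beta> = X i"
    "fa_sub (sbr s' a' (relabel \<pi> \<alpha>) (relabel \<pi> \<beta>)) (if d then fa_one else fa_zero)
      \<in> (rels s' a' N :: 'k::comm_ring_1 fa set)"
proof -
  from assms consider
      (DX) i j where "r = fa_sub (sbr s a (D i) (X j)) (if i = j then fa_one else fa_zero)" "i \<in> {1..N}" "j \<in> {1..N}"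
    | (XX) i j where "r = sbr s a (X i) (X j)" "i \<in> {1..N}" "j \<in> {1..N}"
    | (DD) i j where "r = sbr s a (D i) (D j)" "i \<in> {1..N}" "j \<in> {1..N}"
    unfolding rels_def by blast
  then show thesis
  proof cases
    case DX
    have "\<pi> i = \<pi> j \<longleftrightarrow> i = j" using DX inverse by metis
    moreover have "fa_sub (sbr s' a' (D (\<pi> i)) (X (\<pi> j))) (if \<pi> i = \<pi> j then fa_one else fa_zero)
        \<in> (rels s' a' N :: 'k fa set)"
      using maps_to DX(2,3) unfolding rels_def by blast
    ultimately show thesis
      using DX by (intro that[of "D i" "X j" "i = j"]) (simp_all add: letters_def)
  next
    case XX
    have "sbr s' a' (X (\<pi> i)) (X (\<pi> j)) \<in> (rels s' a' N :: 'k fa set)"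
      using maps_to XX(2,3) unfolding rels_def by blast
    then show thesis
      using XX by (intro that[of "X i" "X j" False]) (simp_all add: letters_def fa_sub_zero)
  next
    case DD
    have "sbr s' a' (D (\<pi> i)) (D (\<pi> j)) \<in> (rels s' a' N :: 'k fa set)"
      using maps_to DD(2,3) unfolding rels_def by blast
    then show thesis
      using DD by (intro that[of "D i" "D j" False]) (simp_all add: letters_def fa_sub_zero)
  qed
qed

lemma T_relation_generator:
  fixes r :: "'k::comm_ring_1 fa"
  assumes r: "r \<in> rels s a N" and u: "set u \<subseteq> letters N" and v: "set v \<subseteq> letters N"
  shows "T (fa_mult (fa_mult (mono u) r) (mono v)) \<in> rel_ideal s' a' N"
proof -
  obtain \<alpha> \<beta> d where \<alpha>: "\<alpha> \<in> letters N" and \<beta>: "\<beta> \<in> letters N"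
    and r_eq: "r = fa_sub (sbr s a \<alpha> \<beta>) (if d then fa_one else fa_zero)"
    and d: "d \<Longrightarrow> \<exists>i. \<alpha> = D i \<and> \<beta> = X i"
    and r': "fa_sub (sbr s' a' (relabel \<pi> \<alpha>) (relabel \<pi> \<beta>)) (if d then fa_one else fa_zero)
      \<in> (rels s' a' N :: 'k fa set)"
    using rels_relabel_cases[OF r] by blast
  let ?r' = "fa_sub (sbr s' a' (relabel \<pi> \<alpha>) (relabel \<pi> \<beta>)) (if d then fa_one else fa_zero) :: 'k fa"
  let ?u = "map (relabel \<pi>) u" and ?v = "map (relabel \<pi>) v"
  let ?A = "?u @ [relabel \<pi> \<alpha>, relabel \<pi> \<beta>] @ ?v" and ?B = "?u @ [relabel \<pi> \<beta>, relabel \<pi> \<alpha>] @ ?v"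
  define \<sigma> where "\<sigma> = (twist_sign P (u @ [\<alpha>, \<beta>] @ v) :: 'k)"
  define c where "c = (if is_commutator s a \<alpha> \<beta> then -1 else 1 :: 'k)"
  define c' where "c' = (if is_commutator s' a' (relabel \<pi> \<alpha>) (relabel \<pi> \<beta>) then -1 else 1 :: 'k)"
  have word_letters: "set (u @ [\<alpha>, \<beta>] @ v) \<subseteq> letters N" "set (u @ [\<beta>, \<alpha>] @ v) \<subseteq> letters N"
    "set (u @ v) \<subseteq> letters N" using u v \<alpha> \<beta> by auto
  have swap: "c * twist_sign P (u @ \<beta> # \<alpha> # v) = \<sigma> * c'"
    using twist_sign_swap[of P u \<beta> \<alpha> v] commutator_relabel[OF \<alpha> \<beta>]
    unfolding \<sigma>_def c_def c'_def by (auto split: if_splits)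
  have insert_D_X: "d \<Longrightarrow> twist_sign P (u @ v) = \<sigma>"
    using d twist_sign_insert_D_X unfolding \<sigma>_def by metis
  have "T (fa_mult (fa_mult (mono u) r) (mono v)) = fa_smult \<sigma> (fa_mult (fa_mult (mono ?u) ?r') (mono ?v))"
  proof
    fix z
    have "T (fa_mult (fa_mult (mono u) r) (mono v)) z
        = \<sigma> * mono ?A z + c * (twist_sign P (u @ [\<beta>, \<alpha>] @ v) * mono ?B z)
          - (if d then twist_sign P (u @ v) * mono (?u @ ?v) z else 0)"
      unfolding r_eq fa_mult_mono_relation_mono T_sub T_add T_smult T_mono[OF word_letters(1)] T_mono[OF word_letters(2)]
      by (cases d) (simp_all add: T_mono[OF word_letters(3)] T_zero[unfolded fa_zero_def] fa_sub_def fa_add_def fa_smult_def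
          fa_zero_def \<sigma>_def c_def)
    also have "\<dots> = \<sigma> * (mono ?A z + c' * mono ?B z - (if d then mono (?u @ ?v) z else 0))"
      using insert_D_X swap by (cases d) (simp_all add: right_diff_distrib distrib_left mult.assoc[symmetric])
    also have "\<dots> = fa_smult \<sigma> (fa_mult (fa_mult (mono ?u) ?r') (mono ?v)) z"
      unfolding fa_mult_mono_relation_mono
      by (cases d) (simp_all add: fa_sub_def fa_add_def fa_smult_def fa_zero_def c'_def)
    finally show "T (fa_mult (fa_mult (mono u) r) (mono v)) z
        = fa_smult \<sigma> (fa_mult (fa_mult (mono ?u) ?r') (mono ?v)) z" .
  qed
  moreover have "fa_mult (fa_mult (mono ?u) ?r') (mono ?v) \<in> rel_ideal s' a' N"
    using r' map_relabel_letters[OF u] map_relabel_letters[OF v] by (rule rel_ideal.gen)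
  ultimately show ?thesis by (simp add: rel_ideal.smult)
qed

lemma T_rel_ideal: "(f :: 'k::comm_ring_1 fa) \<in> rel_ideal s a N \<Longrightarrow> T f \<in> rel_ideal s' a' N"
proof (induction rule: rel_ideal.induct)
  case zero
  then show ?case by (simp add: T_zero rel_ideal.zero)
next
  case (gen r u v)
  then show ?case by (rule T_relation_generator)
next
  case (add f g)
  then show ?case by (simp add: T_add rel_ideal.add)
next
  case (smult f c)
  then show ?case by (simp add: T_smult rel_ideal.smult)
qed

lemma T_carrier:
  assumes "(f :: 'k::comm_ring_1 fa) \<in> fa_carrier N"
  shows "T f \<in> fa_carrier N"
proof -
  have "{z. T f z \<noteq> 0} \<subseteq> map (relabel \<pi>) ` {w. f w \<noteq> 0}"
  proof
    fix z assume "z \<in> {z. T f z \<noteq> 0}"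
    then have z: "set z \<subseteq> letters N" and nz: "f (map (relabel \<pi>') z) \<noteq> 0" using T_nonzero by auto
    show "z \<in> map (relabel \<pi>) ` {w. f w \<noteq> 0}"
      using map_relabel_inverse'[OF z] nz by (intro image_eqI[of _ _ "map (relabel \<pi>') z"]) auto
  qed
  then have "finite {z. T f z \<noteq> 0}"
    using assms by (auto simp: fa_carrier_def intro: finite_subset)
  then show ?thesis using T_nonzero by (auto simp: fa_carrier_def)
qed

lemma T_CA: "(f :: 'k::comm_ring_1 fa) \<in> CA s a b \<Longrightarrow> T f \<in> CA s' a' b'"
  using T_carrier T_nonzero by (fastforce simp: CA_source_iff CA_target_iff)

lemma T_CA_par:
  assumes f: "(f :: 'k::comm_ring_1 fa) \<in> CA_par s a b e"
  shows "T f \<in> CA_par s' a' b' e"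
proof -
  have f_CA: "f \<in> CA s a b" using f by (simp add: CA_par_def)
  have "word_par a' z = e" if nz: "T f z \<noteq> 0" for z
  proof -
    have z: "set z \<subseteq> letters N" and fz: "f (map (relabel \<pi>') z) \<noteq> 0" using T_nonzero[OF nz] by auto
    have "even (length (map (relabel \<pi>') z))" using fz f_CA by (auto simp: CA_source_iff)
    then have "word_par a' z = word_par a (map (relabel \<pi>') z)"
      using word_par_relabel[OF map_relabel_letters'[OF z]] map_relabel_inverse'[OF z] by simp
    also have "\<dots> = e" using f fz by (auto simp: CA_par_def)
    finally show ?thesis .
  qed
  then show ?thesis using T_CA[OF f_CA] by (simp add: CA_par_def)
qed

text \<open>Multiplicativity needs even right factors: only there is the twisting sign multiplicative.\<close>

lemma T_mult:
  assumes f: "(f :: 'k::comm_ring_1 fa) \<in> CA s a b" and g: "g \<in> CA s a b"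
  shows "T (fa_mult f g) = fa_mult (T f) (T g)"
proof
  fix z
  show "T (fa_mult f g) z = fa_mult (T f) (T g) z"
  proof (cases "set z \<subseteq> letters N")
    case True
    define w where "w = map (relabel \<pi>') z"
    have "T (fa_mult f g) z = (\<Sum>i\<le>length z. twist_sign P w * (f (take i w) * g (drop i w)))"
      using True by (simp add: T_apply fa_mult_def w_def sum_distrib_left)
    also have "\<dots> = (\<Sum>i\<le>length z. T f (take i z) * T g (drop i z))"
    proof (rule sum.cong)
      fix i
      have "set (take i z) \<subseteq> letters N" "set (drop i z) \<subseteq> letters N"
        using True by (meson order_trans set_take_subset set_drop_subset)+
      moreover have "map (relabel \<pi>') (take i z) = take i w" "map (relabel \<pi>') (drop i z) = drop i w"
        by (simp_all add: w_def take_map drop_map)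
      moreover have "twist_sign P w = (twist_sign P (take i w) * twist_sign P (drop i w) :: 'k)"
        if "g (drop i w) \<noteq> 0"
        using that g twist_sign_append[of "drop i w" P "take i w"] by (auto simp: CA_source_iff)
      ultimately show "twist_sign P w * (f (take i w) * g (drop i w)) = T f (take i z) * T g (drop i z)"
        by (cases "g (drop i w) = 0") (simp_all add: T_apply mult_ac)
    qed simp
    also have "\<dots> = fa_mult (T f) (T g) z" by (simp add: fa_mult_def)
    finally show ?thesis .
  next
    case False
    then have "\<not> set (take i z) \<subseteq> letters N \<or> \<not> set (drop i z) \<subseteq> letters N" for i
      by (metis append_take_drop_id le_sup_iff set_append)
    then have "T f (take i z) * T g (drop i z) = 0" for i
      by (metis T_apply_nonletters mult_zero_left mult_zero_right)
    then show ?thesis using False by (simp add: T_apply_nonletters fa_mult_def)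
  qed
qed

definition induced :: "'k::comm_ring_1 fa set \<Rightarrow> 'k fa set" where
  "induced F = cls s' a' b' (T (SOME f. f \<in> CA s a b \<and> F = cls s a b f))"

lemma cls_eq_iff_source:
  "f \<in> fa_carrier N \<Longrightarrow> g \<in> fa_carrier N \<Longrightarrow> cls s a b f = cls s a b g \<longleftrightarrow> fa_sub f g \<in> rel_ideal s a N"
  using cls_eq_iff[of f a b g s] dims by simp

lemma cls_eq_iff_target:
  "f \<in> fa_carrier N \<Longrightarrow> g \<in> fa_carrier N \<Longrightarrow> cls s' a' b' f = cls s' a' b' g \<longleftrightarrow> fa_sub f g \<in> rel_ideal s' a' N"
  using cls_eq_iff[of f a' b' g s'] dims by simp

lemma induced_cls:
  assumes f: "f \<in> CA s a b"
  shows "induced (cls s a b f) = cls s' a' b' (T f)"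
proof -
  define f0 where "f0 = (SOME f0. f0 \<in> CA s a b \<and> cls s a b f = cls s a b f0)"
  have "f0 \<in> CA s a b \<and> cls s a b f = cls s a b f0"
    unfolding f0_def by (rule someI[of _ f]) (simp add: f)
  then have f0: "f0 \<in> CA s a b" and "cls s a b f0 = cls s a b f" by auto
  then have "fa_sub f0 f \<in> rel_ideal s a N" using f by (simp add: cls_eq_iff_source CA_source_iff)
  then have "fa_sub (T f0) (T f) \<in> rel_ideal s' a' N"
    using T_rel_ideal by (fastforce simp: T_sub)
  then have "cls s' a' b' (T f0) = cls s' a' b' (T f)"
    using f0 f by (simp add: cls_eq_iff_target T_carrier CA_source_iff)
  then show ?thesis unfolding induced_def f0_def[symmetric] .
qed

lemma induced_cls_eq_iff:
  "f \<in> CA s a b \<Longrightarrow> h \<in> fa_carrier N \<Longrightarrow>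
    induced (cls s a b f) = cls s' a' b' h \<longleftrightarrow> fa_sub (T f) h \<in> rel_ideal s' a' N"
  by (simp add: induced_cls cls_eq_iff_target T_carrier CA_source_iff)

lemma induced_add:
  assumes "f \<in> CA s a b" "g \<in> CA s a b" "h \<in> fa_carrier N" "h' \<in> fa_carrier N"
    and "induced (cls s a b f) = cls s' a' b' h" "induced (cls s a b g) = cls s' a' b' h'"
  shows "induced (cls s a b (fa_add f g)) = cls s' a' b' (fa_add h h')"
proof -
  have "fa_sub (T (fa_add f g)) (fa_add h h') = fa_add (fa_sub (T f) h) (fa_sub (T g) h')"
    by (simp add: T_add) (auto simp: fa_sub_def fa_add_def)
  then show ?thesis
    using assms by (simp add: induced_cls_eq_iff CA_add fa_carrier_add rel_ideal.add)
qed

lemma induced_mult: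
  assumes "f \<in> CA s a b" "g \<in> CA s a b" "h \<in> fa_carrier N" "h' \<in> fa_carrier N"
    and "induced (cls s a b f) = cls s' a' b' h" "induced (cls s a b g) = cls s' a' b' h'"
  shows "induced (cls s a b (fa_mult f g)) = cls s' a' b' (fa_mult h h')"
proof -
  have "fa_sub (T (fa_mult f g)) (fa_mult h h')
      = fa_add (fa_mult (fa_sub (T f) h) (T g)) (fa_mult h (fa_sub (T g) h'))"
    using assms by (simp add: T_mult fa_mult_sub_left fa_mult_sub_right) (auto simp: fa_sub_def fa_add_def)
  moreover have "T g \<in> fa_carrier N" using assms(2) by (intro T_carrier) (simp add: CA_source_iff)
  ultimately show ?thesis
    using assms by (simp add: induced_cls_eq_iff CA_mult fa_carrier_mult rel_ideal.add
        rel_ideal_mult_left rel_ideal_mult_right)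
qed

lemma induced_smult:
  assumes "f \<in> CA s a b" "h \<in> fa_carrier N" "induced (cls s a b f) = cls s' a' b' h"
  shows "induced (cls s a b (fa_smult c f)) = cls s' a' b' (fa_smult c h)"
proof -
  have "fa_sub (T (fa_smult c f)) (fa_smult c h) = fa_smult c (fa_sub (T f) h)"
    by (simp add: T_smult) (auto simp: fa_sub_def fa_smult_def right_diff_distrib)
  then show ?thesis
    using assms by (simp add: induced_cls_eq_iff CA_smult fa_carrier_smult rel_ideal.smult)
qed

lemma induced_one: "induced (cls s a b fa_one) = cls s' a' b' fa_one"
  by (simp add: induced_cls CA_one T_one)

end

locale twist_pair =
  fwd: twist N \<pi> \<pi>' P s a b s' a' b' + bwd: twist N \<pi>' \<pi> P' s' a' b' s a b
  for N \<pi> \<pi>' P s a b P' s' a' b' +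
  assumes sign_relabel: "\<And>i. i \<in> {1..N} \<Longrightarrow> P' (\<pi> i) = P i"
begin

lemma bwd_fwd: "f \<in> fa_carrier N \<Longrightarrow> bwd.T (fwd.T f) = (f :: 'k::comm_ring_1 fa)"
  using twisted_relabel_cancel fwd.maps_to fwd.inverse sign_relabel by blast

lemma fwd_bwd: "g \<in> fa_carrier N \<Longrightarrow> fwd.T (bwd.T g) = (g :: 'k::comm_ring_1 fa)"
proof (rule twisted_relabel_cancel)
  show "P (\<pi>' i) = P' i" if "i \<in> {1..N}" for i
    using that sign_relabel[of "\<pi>' i"] fwd.maps_to' fwd.inverse' by simp
qed (use fwd.maps_to' fwd.inverse' in auto)

lemma cls_eq_induced_bwd:
  "g \<in> CA s' a' b' \<Longrightarrow> cls s' a' b' g = fwd.induced (cls s a b (bwd.T (g :: 'k::comm_ring_1 fa)))"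
  by (simp add: fwd.induced_cls bwd.T_CA fwd_bwd fwd.CA_target_iff)

lemma induced_image:
  fixes A B :: "'k::comm_ring_1 fa set"
  assumes "A \<subseteq> CA s a b" "B \<subseteq> CA s' a' b'"
    and "\<And>f. f \<in> A \<Longrightarrow> fwd.T f \<in> B" "\<And>g. g \<in> B \<Longrightarrow> bwd.T g \<in> A"
  shows "fwd.induced ` cls s a b ` A = cls s' a' b' ` B"
proof
  show "fwd.induced ` cls s a b ` A \<subseteq> cls s' a' b' ` B"
  proof (intro image_subsetI, elim imageE)
    fix F f assume "F = cls s a b f" "f \<in> A"
    then show "fwd.induced F \<in> cls s' a' b' ` B"
      using assms(1,3) fwd.induced_cls by blast
  qed
  show "cls s' a' b' ` B \<subseteq> fwd.induced ` cls s a b ` A"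
  proof
    fix G assume "G \<in> cls s' a' b' ` B"
    then obtain g where "G = cls s' a' b' g" "g \<in> B" by blast
    then show "G \<in> fwd.induced ` cls s a b ` A"
      using assms(2,4) cls_eq_induced_bwd by blast
  qed
qed

lemma bij_induced:
  "bij_betw fwd.induced (cls s a b ` CA s a b) (cls s' a' b' ` (CA s' a' b' :: 'k::comm_ring_1 fa set))"
proof (rule bij_betw_imageI)
  show "inj_on fwd.induced (cls s a b ` (CA s a b :: 'k fa set))"
  proof (rule inj_onI, elim imageE)
    fix X Y :: "'k fa set" and f g :: "'k fa"
    assume "fwd.induced X = fwd.induced Y" and X: "X = cls s a b f" and f: "f \<in> CA s a b"
      and Y: "Y = cls s a b g" and g: "g \<in> CA s a b"
    then have "fa_sub (fwd.T f) (fwd.T g) \<in> rel_ideal s' a' N"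
      by (simp add: fwd.induced_cls fwd.cls_eq_iff_target fwd.T_carrier fwd.CA_source_iff)
    then have "fa_sub f g \<in> rel_ideal s a N"
      using bwd.T_rel_ideal f g by (force simp: bwd.T_sub bwd_fwd fwd.CA_source_iff)
    then show "X = Y"
      unfolding X Y using f g by (simp add: fwd.cls_eq_iff_source fwd.CA_source_iff)
  qed
  show "fwd.induced ` cls s a b ` CA s a b = cls s' a' b' ` (CA s' a' b' :: 'k fa set)"
    by (rule induced_image) (simp_all add: fwd.T_CA bwd.T_CA)
qed

lemma induced_image_CA_par:
  "fwd.induced ` cls s a b ` CA_par s a b e = cls s' a' b' ` (CA_par s' a' b' e :: 'k::comm_ring_1 fa set)"
proof (rule induced_image)
  show "CA_par s a b e \<subseteq> CA s a b" "CA_par s' a' b' e \<subseteq> (CA s' a' b' :: 'k fa set)"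
    by (auto simp: CA_par_def)
qed (simp_all add: fwd.T_CA_par bwd.T_CA_par)

theorem C_super_iso: "C_super_iso TYPE('k::comm_ring_1) s a b s' a' b'"
  unfolding C_super_iso_def fwd.dims
  by (intro exI[of _ fwd.induced] conjI ballI allI impI bij_induced induced_image_CA_par
      fwd.induced_add fwd.induced_mult fwd.induced_smult fwd.induced_one) auto

end

section \<open>Exchanging the two index blocks\<close>

definition swap_blocks :: "nat \<Rightarrow> nat \<Rightarrow> nat \<Rightarrow> nat" where
  "swap_blocks a b i = (if i \<le> a then i + b else i - a)"

text \<open>The pair x_i, \<partial>_i of A^s_{a|b} is a Weyl pair.\<close>

definition weyl_index :: "bool \<Rightarrow> nat \<Rightarrow> nat \<Rightarrow> bool" where
  "weyl_index s a i \<longleftrightarrow> (s \<longleftrightarrow> a < i)"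

lemma length_filter_not_mod_2:
  "even (length w) \<Longrightarrow> length (filter (\<lambda>x. \<not> R x) w) mod 2 = length (filter R w) mod 2"
  using sum_length_filter_compl[of R w] by presburger

lemma twist_swap_blocks:
  "twist (a + b) (swap_blocks a b) (swap_blocks b a) (weyl_index s a) s a b (\<not> s) b a"
proof
  fix g h assume "g \<in> letters (a + b)" "h \<in> letters (a + b)"
  then show "(is_commutator s a g h \<longleftrightarrow>
      is_commutator (\<not> s) b (relabel (swap_blocks a b) g) (relabel (swap_blocks a b) h))
      \<longleftrightarrow> weyl_index s a (gidx g) = weyl_index s a (gidx h)"
    by (auto simp: is_commutator_def gpar_def gidx_relabel swap_blocks_def weyl_index_def letters_def)
next
  fix w assume w: "set w \<subseteq> letters (a + b)" and "even (length w)"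
  have "filter ((\<lambda>g. b < gidx g) \<circ> relabel (swap_blocks a b)) w = filter (\<lambda>g. \<not> a < gidx g) w"
    using w by (intro filter_cong) (auto simp: gidx_relabel swap_blocks_def letters_def)
  then show "word_par b (map (relabel (swap_blocks a b)) w) = word_par a w"
    using \<open>even (length w)\<close> by (simp add: word_par_eq_count filter_map length_filter_not_mod_2)
qed (auto simp: swap_blocks_def)

lemma twist_pair_swap_blocks:
  "twist_pair (a + b) (swap_blocks a b) (swap_blocks b a) (weyl_index s a) s a b
    (weyl_index (\<not> s) b) (\<not> s) b a"
proof (rule twist_pair.intro)
  show "twist (a + b) (swap_blocks a b) (swap_blocks b a) (weyl_index s a) s a b (\<not> s) b a"
    by (rule twist_swap_blocks)
  show "twist (a + b) (swap_blocks b a) (swap_blocks a b) (weyl_index (\<not> s) b) (\<not> s) b a s a b"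
    using twist_swap_blocks[of b a "\<not> s"] by (simp add: add.commute)
  show "twist_pair_axioms (a + b) (swap_blocks a b) (weyl_index s a) (weyl_index (\<not> s) b)"
    by unfold_locales (auto simp: swap_blocks_def weyl_index_def)
qed

theorem mainTheorem16:
  fixes p q :: nat
  assumes "p + q > 0"
  shows "C_super_iso TYPE('k::{alg_closed_field, field_char_0}) True p q False q p"
  using twist_pair.C_super_iso[OF twist_pair_swap_blocks[of p q True]] by simp

end
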